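(* Let $A=(a_1,\dots,a_k)$ be a telescopic sequence of positive integers which is minimal, i.e. no $a_i$ is an $\mathbb{N}_0$-linear combination of the other $a_j$. If $\gcd(a_i,a_j)=1$ for some $i<j$, then $j=k$.
   Context: For a sequence $A=(a_1,\dots,a_k)$ of non-negative integers, let $d_i=\gcd(a_1,\dots,a_i)$ and $S_i=\langle a_1,\dots,a_i\rangle$ (the set of $\mathbb{N}_0$-linear combinations of $a_1,\dots,a_i$) for $i\in\{1,\dots,k\}$, and let $c_j=d_{j-1}/d_j$ for $j\in\{2,\dots,k\}$. The sequence $A$ is telescopic if $c_ja_j\in S_{j-1}$ for all $j\in\{2,\dots,k\}$. *)

theory Defs
  imports Main
begin

text \<open>Sequences A = (a_1,...,a_k) are represented by a function a :: nat => nat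
  together with the length k; only the values a 1, ..., a k matter.\<close>

definition seq_gcd :: "(nat \<Rightarrow> nat) \<Rightarrow> nat \<Rightarrow> nat" where
  "seq_gcd a i = Gcd (a ` {1..i})"

definition seq_semigroup :: "(nat \<Rightarrow> nat) \<Rightarrow> nat \<Rightarrow> nat set" where
  "seq_semigroup a i = {(\<Sum>l\<in>{1..i}. c l * a l) | c. True}"

definition seq_c :: "(nat \<Rightarrow> nat) \<Rightarrow> nat \<Rightarrow> nat" where
  "seq_c a j = seq_gcd a (j - 1) div seq_gcd a j"

definition telescopic :: "(nat \<Rightarrow> nat) \<Rightarrow> nat \<Rightarrow> bool" where
  "telescopic a k \<longleftrightarrow> (\<forall>j\<in>{2..k}. seq_c a j * a j \<in> seq_semigroup a (j - 1))"

definition minimal_seq :: "(nat \<Rightarrow> nat) \<Rightarrow> nat \<Rightarrow> bool" where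
  "minimal_seq a k \<longleftrightarrow>
     (\<forall>i\<in>{1..k}. \<not> (\<exists>c. a i = (\<Sum>l\<in>{1..k} - {i}. c l * a l)))"

end

theory Submission
  imports Defs
begin

text \<open>Once two coprime entries have occurred, all later prefix gcds are 1, so every later
  index j has c_j = 1 and telescopy puts a_j itself into the semigroup of its predecessors,
  which minimality forbids.\<close>

lemma seq_gcd_dvd_gcd:
  assumes "i \<in> {1..m}" "j \<in> {1..m}"
  shows "seq_gcd a m dvd gcd (a i) (a j)"
  using assms unfolding seq_gcd_def by simp

lemma seq_gcd_eq_1_if_coprime:
  assumes "1 \<le> i" "i \<le> m" "1 \<le> j" "j \<le> m" "gcd (a i) (a j) = 1"
  shows "seq_gcd a m = 1"
  using seq_gcd_dvd_gcd[of i m j a] assms by simp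

lemma seq_c_eq_1_if_coprime:
  assumes "1 \<le> i" "i < j" "j < m" "gcd (a i) (a j) = 1"
  shows "seq_c a m = 1"
proof -
  have "seq_gcd a (m - 1) = 1" "seq_gcd a m = 1"
    using assms seq_gcd_eq_1_if_coprime[of i _ j a] by simp_all
  then show ?thesis
    unfolding seq_c_def by simp
qed

lemma telescopic_in_seq_semigroup:
  assumes "telescopic a k" "m \<in> {2..k}" "seq_c a m = 1"
  shows "a m \<in> seq_semigroup a (m - 1)"
  using assms unfolding telescopic_def by force

lemma minimal_seq_not_in_seq_semigroup:
  assumes "minimal_seq a k" "m \<in> {1..k}"
  shows "a m \<notin> seq_semigroup a (m - 1)"
proof
  assume "a m \<in> seq_semigroup a (m - 1)"
  then obtain c where c: "a m = (\<Sum>l\<in>{1..m - 1}. c l * a l)"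
    unfolding seq_semigroup_def by auto
  define c' where "c' l = (if l < m then c l else 0)" for l
  have "(\<Sum>l\<in>{1..k} - {m}. c' l * a l) = (\<Sum>l\<in>{1..m - 1}. c' l * a l)"
    using assms(2) by (intro sum.mono_neutral_right) (auto simp: c'_def)
  also have "\<dots> = a m"
    unfolding c by (intro sum.cong) (auto simp: c'_def)
  finally show False
    using assms unfolding minimal_seq_def by metis
qed

theorem mainTheorem11:
  fixes a :: "nat \<Rightarrow> nat" and k i j :: nat
  assumes "\<forall>l\<in>{1..k}. 0 < a l"
    and "telescopic a k"
    and "minimal_seq a k"
    and "1 \<le> i" and "i < j" and "j \<le> k"
    and "gcd (a i) (a j) = 1"
  shows "j = k"
proof (rule ccontr)
  assume "j \<noteq> k"
  with assms(4-6) have "k \<in> {2..k}" "k \<in> {1..k}" "j < k" by auto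
  with assms(4,5,7) have "seq_c a k = 1"
    by (intro seq_c_eq_1_if_coprime[of i j k a])
  with assms(2) \<open>k \<in> {2..k}\<close> have "a k \<in> seq_semigroup a (k - 1)"
    by (rule telescopic_in_seq_semigroup)
  with assms(3) \<open>k \<in> {1..k}\<close> show False
    using minimal_seq_not_in_seq_semigroup by blast
qed

end
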